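(* Fix a branch-and-bound node $\mathcal{N}$ and let $\boldsymbol{\beta}^\star$ solve the node relaxation $\min_{\boldsymbol{\beta}\in\mathbb{R}^p} F(\boldsymbol{X}\boldsymbol{\beta})+2\lambda_2 g_{\mathcal{N}}(\boldsymbol{\beta})$. Let $\bar k=k-|\mathcal{J}_1(\mathcal{N})|$ and $p_f=|\mathcal{J}_f(\mathcal{N})|$. Set $z_j^\star=0$ for $j\in\mathcal{J}_0(\mathcal{N})$ and $z_j^\star=1$ for $j\in\mathcal{J}_1(\mathcal{N})$. On the free set $\mathcal{J}_f(\mathcal{N})$: if $\bar k=0$, set $z_j^\star=0$. If at most $\bar k$ free coefficients are nonzero, set $z_j^\star=1$ for nonzero $\beta_j^\star$ and $z_j^\star=0$ for zero $\beta_j^\star$. Otherwise, sort the free magnitudes as $|\beta_{\pi(1)}^\star|\ge\cdots\ge|\beta_{\pi(p_f)}^\star|$ and find an index $s\in\{0,\ldots,\bar k-1\}$ such that \[ \tau:=\frac{\sum_{r=s+1}^{p_f}|\beta_{\pi(r)}^\star|}{\bar k-s},\qquad |\beta_{\pi(s)}^\star|\ge \tau \ge |\beta_{\pi(s+1)}^\star|, \] with the convention $|\beta_{\pi(0)}^\star|=+\infty$; then set $z_{\pi(r)}^\star=1$ for $r\le s$ and $z_{\pi(r)}^\star=|\beta_{\pi(r)}^\star|/\tau$ for $r>s$, $r=1,\ldots,p_f$. The resulting vector $\boldsymbol{z}^\star$ is an optimal relaxed indicator vector paired with $\boldsymbol{\beta}^\star$, i.e., it attains the infimum defining $g_{\m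athcal{N}}(\boldsymbol{\beta}^\star)$.
   Context: Setting: cardinality-constrained generalized linear model $\min_{\boldsymbol{\beta}}\{f(\boldsymbol{X}\boldsymbol{\beta},\boldsymbol{y})+\lambda_2\|\boldsymbol{\beta}\|_2^2: \|\boldsymbol{\beta}\|_0\le k,\ \|\boldsymbol{\beta}\|_\infty\le M\}$ with $\boldsymbol{X}\in\mathbb{R}^{n\times p}$, convex differentiable loss $f$, $F(\boldsymbol{X}\boldsymbol{\beta}):=f(\boldsymbol{X}\boldsymbol{\beta},\boldsymbol{y})$, $\lambda_2>0$, $M>0$. A branch-and-bound node $\mathcal{N}$ partitions $[p]$ into $\mathcal{J}_0(\mathcal{N})$ (indicators fixed to 0), $\mathcal{J}_1(\mathcal{N})$ (fixed to 1), and the free set $\mathcal{J}_f(\mathcal{N})$. The perspective-relaxation function is $g_{\mathcal{N}}(\boldsymbol{\beta}):=\inf_{\boldsymbol{z}}\{\tfrac12\sum_{j=1}^p\beta_j^2/z_j:\ z_j\in[0,1]\ \forall j\in\mathcal{J}_f(\mathcal{N}),\ \mathbf{1}^\top\boldsymbol{z}\le k,\ |\beta_j|\le Mz_j,\ z_j=0\ \forall j\in\mathcal{J}_0(\mathcal{N}),\ z_j=1\ \forall j\in\mathcal{J}_1(\mathcal{N})\}$, with the convention $\beta_j^2/z_j=0$ when $(\beta_j,z_j)=(0,0)$ and $+\infty$ when $z_j=0$, $\beta_j\neq0$. *)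

theory Defs
  imports "HOL-Analysis.Analysis"
begin

definition persp :: "real \<Rightarrow> real \<Rightarrow> ereal" where
  "persp b z = (if z = 0 then (if b = 0 then 0 else \<infinity>) else ereal (b\<^sup>2 / z))"

definition node_feasible_z ::
  "'p::finite set \<Rightarrow> 'p set \<Rightarrow> 'p set \<Rightarrow> nat \<Rightarrow> real \<Rightarrow> real^'p \<Rightarrow> real^'p \<Rightarrow> bool" where
  "node_feasible_z J0 J1 Jf k M \<beta> z \<longleftrightarrow>
     (\<forall>j\<in>Jf. 0 \<le> z$j \<and> z$j \<le> 1) \<and>
     (\<Sum>j\<in>UNIV. z$j) \<le> real k \<and>
     (\<forall>j. \<bar>\<beta>$j\<bar> \<le> M * z$j) \<and>
     (\<forall>j\<in>J0. z$j = 0) \<and>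
     (\<forall>j\<in>J1. z$j = 1)"

definition persp_obj :: "real^'p::finite \<Rightarrow> real^'p \<Rightarrow> ereal" where
  "persp_obj \<beta> z = ereal (1/2) * (\<Sum>j\<in>UNIV. persp (\<beta>$j) (z$j))"

definition g_node ::
  "'p::finite set \<Rightarrow> 'p set \<Rightarrow> 'p set \<Rightarrow> nat \<Rightarrow> real \<Rightarrow> real^'p \<Rightarrow> ereal" where
  "g_node J0 J1 Jf k M \<beta> = (INF z \<in> {z. node_feasible_z J0 J1 Jf k M \<beta> z}. persp_obj \<beta> z)"

definition tau_split :: "real^'p::finite \<Rightarrow> (nat \<Rightarrow> 'p) \<Rightarrow> nat \<Rightarrow> nat \<Rightarrow> nat \<Rightarrow> real" where
  "tau_split \<beta> \<pi> pf kbar s = (\<Sum>r=s+1..pf. \<bar>\<beta>$(\<pi> r)\<bar>) / (real kbar - real s)"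

text \<open>Admissible split index s in {0,...,kbar-1}, with |beta_{pi(0)}| = +infinity.\<close>
definition split_ok :: "real^'p::finite \<Rightarrow> (nat \<Rightarrow> 'p) \<Rightarrow> nat \<Rightarrow> nat \<Rightarrow> nat \<Rightarrow> bool" where
  "split_ok \<beta> \<pi> pf kbar s \<longleftrightarrow>
     s < kbar \<and>
     (s = 0 \<or> \<bar>\<beta>$(\<pi> s)\<bar> \<ge> tau_split \<beta> \<pi> pf kbar s) \<and>
     tau_split \<beta> \<pi> pf kbar s \<ge> \<bar>\<beta>$(\<pi> (s+1))\<bar>"

text \<open>The constructed vector z*, for sorting map pi of {1..pf} onto Jf and split index s
  (s only matters in the third case).\<close>
definition zstar ::
  "'p::finite set \<Rightarrow> 'p set \<Rightarrow> 'p set \<Rightarrow> nat \<Rightarrow> real^'p \<Rightarrow> (nat \<Rightarrow> 'p) \<Rightarrow> nat \<Rightarrow> real^'p" where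
  "zstar J0 J1 Jf k \<beta> \<pi> s =
     (let kbar = k - card J1; pf = card Jf; nnz = card {j\<in>Jf. \<beta>$j \<noteq> 0} in
      \<chi> j. if j \<in> J0 then 0
            else if j \<in> J1 then 1
            else if kbar = 0 then 0
            else if nnz \<le> kbar then (if \<beta>$j \<noteq> 0 then 1 else 0)
            else (if inv_into {1..pf} \<pi> j \<le> s then 1
                  else \<bar>\<beta>$j\<bar> / tau_split \<beta> \<pi> pf kbar s))"

end

theory Submission
  imports Defs
begin

text \<open>For fixed beta, the infimum defining g_N(beta) is a separable convex problem in z over a
  capped simplex, and z* is certified optimal by Lagrangian duality for the budget constraint
  sum_{j in Jf} z_j <= kbar = k - |J1|. With multiplier tau^2, each coordinate problem
  min_{z in [0,1]} beta_j^2/z + tau^2 z is solved by z = min 1 (|beta_j|/tau), and the split index s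
  is exactly what makes this profile spend the whole budget; summing the coordinate bounds shows
  that no feasible z does better. When at most kbar free coefficients are nonzero the budget is
  slack and the support indicator is optimal coordinatewise, as beta_j^2/z >= beta_j^2 for z <= 1.
  Optimality of beta* for the node relaxation is used only to know g_N(beta*) < infinity, i.e. that
  some feasible z exists; this gives beta* = 0 on J0 and |beta*_j| <= M, which is what makes z*
  feasible.\<close>

text \<open>reverse_huber t b is the minimum of b^2/z + t^2 z over z in [0,1], attained at
  z = min 1 (|b|/t); up to the factor 2t it is the reverse Huber (berHu) penalty.\<close>

definition reverse_huber :: "real \<Rightarrow> real \<Rightarrow> real" where
  "reverse_huber t b = (if t \<le> \<bar>b\<bar> then b\<^sup>2 + t\<^sup>2 else 2 * \<bar>b\<bar> * t)"

lemma sq_le_divide_of_le_one: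
  fixes b z :: real
  assumes "0 \<le> z" "z \<le> 1" "z = 0 \<Longrightarrow> b = 0"
  shows "b\<^sup>2 \<le> b\<^sup>2 / z"
proof (cases "z = 0")
  case True
  with assms(3) show ?thesis by simp
next
  case False
  with assms(1) have "0 < z" by simp
  moreover have "b\<^sup>2 * z \<le> b\<^sup>2" using assms(2) by (simp add: mult_left_le)
  ultimately show ?thesis by (simp add: le_divide_eq)
qed

lemma reverse_huber_le:
  fixes b z t :: real
  assumes "0 \<le> t" "0 \<le> z" "z \<le> 1" "z = 0 \<Longrightarrow> b = 0"
  shows "reverse_huber t b \<le> b\<^sup>2 / z + t\<^sup>2 * z"
proof (cases "z = 0")
  case True
  then show ?thesis using assms by (simp add: reverse_huber_def)
next
  case False
  with assms(2) have z: "0 < z" by simp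
  show ?thesis
  proof (cases "t \<le> \<bar>b\<bar>")
    case True
    have "t\<^sup>2 \<le> b\<^sup>2" using True assms(1) by (metis abs_le_square_iff abs_of_nonneg)
    moreover have "b\<^sup>2 \<le> b\<^sup>2 / z" by (rule sq_le_divide_of_le_one) (use assms in auto)
    ultimately have "0 \<le> (1 - z) * (b\<^sup>2 / z - t\<^sup>2)" using assms(3) by simp
    also have "\<dots> = b\<^sup>2 / z + t\<^sup>2 * z - (b\<^sup>2 + t\<^sup>2)" using z by (simp add: field_simps)
    finally show ?thesis using True by (simp add: reverse_huber_def)
  next
    case False
    have "0 \<le> (\<bar>b\<bar> - t * z)\<^sup>2 / z" using z by simp
    also have "\<dots> = b\<^sup>2 / z + t\<^sup>2 * z - 2 * \<bar>b\<bar> * t"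
      using z by (simp add: field_simps power2_eq_square)
    finally show ?thesis using False by (simp add: reverse_huber_def)
  qed
qed

lemma reverse_huber_attained:
  fixes b w t :: real
  assumes "0 < t" "(w = 1 \<and> t \<le> \<bar>b\<bar>) \<or> (w = \<bar>b\<bar> / t \<and> \<bar>b\<bar> \<le> t)"
  shows "b\<^sup>2 / w + t\<^sup>2 * w = reverse_huber t b"
  using assms(2)
proof
  assume "w = 1 \<and> t \<le> \<bar>b\<bar>"
  then show ?thesis by (simp add: reverse_huber_def)
next
  assume w: "w = \<bar>b\<bar> / t \<and> \<bar>b\<bar> \<le> t"
  have "b\<^sup>2 / (\<bar>b\<bar> / t) = \<bar>b\<bar> * t"
    using assms(1) by (cases "b = 0") (simp_all add: field_simps power2_eq_square)
  moreover have "b\<^sup>2 + t\<^sup>2 = 2 * \<bar>b\<bar> * t" if "t \<le> \<bar>b\<bar>"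
  proof -
    from that w have "\<bar>b\<bar> = t" by simp
    then show ?thesis
      unfolding power2_abs[of b, symmetric] by (simp add: power2_eq_square)
  qed
  ultimately show ?thesis
    using w assms(1) by (simp add: reverse_huber_def power2_eq_square)
qed

lemma threshold_minimizes_sum_sq_divide:
  fixes b w z :: "'a \<Rightarrow> real"
  assumes t: "0 < t"
    and w: "\<And>j. j \<in> I \<Longrightarrow> (w j = 1 \<and> t \<le> \<bar>b j\<bar>) \<or> (w j = \<bar>b j\<bar> / t \<and> \<bar>b j\<bar> \<le> t)"
    and z: "\<And>j. j \<in> I \<Longrightarrow> 0 \<le> z j \<and> z j \<le> 1" "\<And>j. j \<in> I \<Longrightarrow> z j = 0 \<Longrightarrow> b j = 0"
    and budget: "sum z I \<le> sum w I"
  shows "(\<Sum>j\<in>I. (b j)\<^sup>2 / w j) \<le> (\<Sum>j\<in>I. (b j)\<^sup>2 / z j)"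
proof -
  have "(\<Sum>j\<in>I. (b j)\<^sup>2 / w j) + t\<^sup>2 * sum w I = (\<Sum>j\<in>I. (b j)\<^sup>2 / w j + t\<^sup>2 * w j)"
    by (simp add: sum.distrib sum_distrib_left)
  also have "\<dots> = (\<Sum>j\<in>I. reverse_huber t (b j))"
    by (rule sum.cong) (use reverse_huber_attained[OF t w] in auto)
  also have "\<dots> \<le> (\<Sum>j\<in>I. (b j)\<^sup>2 / z j + t\<^sup>2 * z j)"
    by (intro sum_mono reverse_huber_le) (use t z in auto)
  also have "\<dots> = (\<Sum>j\<in>I. (b j)\<^sup>2 / z j) + t\<^sup>2 * sum z I"
    by (simp add: sum.distrib sum_distrib_left)
  also have "\<dots> \<le> (\<Sum>j\<in>I. (b j)\<^sup>2 / z j) + t\<^sup>2 * sum w I"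
    using budget by (simp add: mult_left_mono)
  finally show ?thesis by simp
qed

lemma split_ok_exists:
  assumes "0 < kbar" "kbar \<le> pf"
  shows "\<exists>s. split_ok \<beta> \<pi> pf kbar s"
proof -
  define a where "a r = \<bar>\<beta>$(\<pi> r)\<bar>" for r
  define T where "T s = tau_split \<beta> \<pi> pf kbar s" for s
  define P where "P s \<longleftrightarrow> a (s + 1) \<le> T s" for s
  have T_eq: "T s = (\<Sum>r=s+1..pf. a r) / (real kbar - real s)" for s
    by (simp add: T_def tau_split_def a_def)
  have "P (kbar - 1)"
  proof -
    have "a kbar \<le> (\<Sum>r=kbar..pf. a r)"
      by (rule member_le_sum) (use assms in \<open>auto simp: a_def\<close>)
    with assms(1) show ?thesis by (simp add: P_def T_eq of_nat_diff)
  qed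
  define s where "s = (LEAST s. P s)"
  have "P s" unfolding s_def by (rule LeastI) fact
  have "s < kbar"
    using Least_le[of P, OF \<open>P (kbar - 1)\<close>] assms(1) unfolding s_def by linarith
  txt \<open>T (s - 1) is the weighted average (a s + d T s) / (d + 1), so the minimality of s,
    i.e. T (s - 1) < a s, forces T s < a s.\<close>
  have "T s \<le> a s" if "s \<noteq> 0"
  proof -
    define d where "d = real kbar - real s"
    have d: "0 < d" using \<open>s < kbar\<close> by (simp add: d_def)
    have S: "(\<Sum>r=s-1+1..pf. a r) = a s + (\<Sum>r=s+1..pf. a r)"
      using that \<open>s < kbar\<close> assms(2) by (simp add: sum.atLeast_Suc_atMost)
    have D: "real kbar - real (s - 1) = d + 1"
      using that by (simp add: d_def of_nat_diff)
    have "T (s - 1) * (d + 1) = a s + (\<Sum>r=s+1..pf. a r)"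
      using d unfolding T_eq S D by simp
    also have "(\<Sum>r=s+1..pf. a r) = T s * d"
      using d by (simp add: T_eq d_def)
    finally have avg: "T (s - 1) * (d + 1) = a s + T s * d" .
    have "\<not> P (s - 1)"
      using not_less_Least[of "s - 1" P] that unfolding s_def by simp
    then have "T (s - 1) < a s" using that by (simp add: P_def)
    then have "T (s - 1) * (d + 1) < a s * (d + 1)"
      using d by (intro mult_strict_right_mono) auto
    then have "T s * d < a s * d" unfolding avg by (simp add: distrib_left)
    with d show ?thesis by simp
  qed
  with \<open>P s\<close> \<open>s < kbar\<close> have "split_ok \<beta> \<pi> pf kbar s"
    by (auto simp: split_ok_def P_def T_def a_def)
  then show ?thesis ..
qed

lemma tau_split_pos:
  fixes \<beta> :: "real^'p::finite"
  assumes \<pi>: "bij_betw \<pi> {1..pf} J" and "s < card {j\<in>J. \<beta>$j \<noteq> 0}" "s < kbar"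
  shows "0 < tau_split \<beta> \<pi> pf kbar s"
proof -
  have "card (\<pi> ` {1..s}) < card {j\<in>J. \<beta>$j \<noteq> 0}"
    using card_image_le[of "{1..s}" \<pi>] assms(2) by simp
  then have "\<not> {j\<in>J. \<beta>$j \<noteq> 0} \<subseteq> \<pi> ` {1..s}"
    by (meson card_mono finite leD)
  then obtain j where j: "j \<in> J" "\<beta>$j \<noteq> 0" "j \<notin> \<pi> ` {1..s}"
    by blast
  have "j \<in> \<pi> ` {1..pf}" using bij_betw_imp_surj_on[OF \<pi>] j(1) by simp
  then obtain r where r: "r \<in> {1..pf}" "\<pi> r = j" by auto
  with j(3) have "r \<in> {s+1..pf}" by auto
  then have "0 < (\<Sum>r=s+1..pf. \<bar>\<beta>$(\<pi> r)\<bar>)"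
    using r j(2) by (intro sum_pos2) auto
  with assms(3) show ?thesis by (simp add: tau_split_def)
qed

lemma split_ok_separates:
  assumes sorted: "\<And>r1 r2. 1 \<le> r1 \<Longrightarrow> r1 \<le> r2 \<Longrightarrow> r2 \<le> pf \<Longrightarrow>
                   \<bar>\<beta>$(\<pi> r2)\<bar> \<le> \<bar>\<beta>$(\<pi> r1)\<bar>"
    and split: "split_ok \<beta> \<pi> pf kbar s" and "s \<le> pf" and r: "r \<in> {1..pf}"
  shows "r \<le> s \<Longrightarrow> tau_split \<beta> \<pi> pf kbar s \<le> \<bar>\<beta>$(\<pi> r)\<bar>"
    and "s < r \<Longrightarrow> \<bar>\<beta>$(\<pi> r)\<bar> \<le> tau_split \<beta> \<pi> pf kbar s"
proof -
  assume "r \<le> s"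
  with r split have "tau_split \<beta> \<pi> pf kbar s \<le> \<bar>\<beta>$(\<pi> s)\<bar>" by (auto simp: split_ok_def)
  also have "\<dots> \<le> \<bar>\<beta>$(\<pi> r)\<bar>" using sorted \<open>r \<le> s\<close> \<open>s \<le> pf\<close> r by auto
  finally show "tau_split \<beta> \<pi> pf kbar s \<le> \<bar>\<beta>$(\<pi> r)\<bar>" .
next
  assume "s < r"
  with r sorted have "\<bar>\<beta>$(\<pi> r)\<bar> \<le> \<bar>\<beta>$(\<pi> (s + 1))\<bar>" by auto
  also have "\<dots> \<le> tau_split \<beta> \<pi> pf kbar s" using split by (simp add: split_ok_def)
  finally show "\<bar>\<beta>$(\<pi> r)\<bar> \<le> tau_split \<beta> \<pi> pf kbar s" .
qed

lemma sum_threshold_profile_eq: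
  assumes "0 < tau_split \<beta> \<pi> pf kbar s" "s < kbar" "s \<le> pf"
  shows "(\<Sum>r=1..pf. if r \<le> s then 1 else \<bar>\<beta>$(\<pi> r)\<bar> / tau_split \<beta> \<pi> pf kbar s) = real kbar"
proof -
  define t where "t = tau_split \<beta> \<pi> pf kbar s"
  have "{1..pf} = {1..s} \<union> {s+1..pf}" using assms(3) by auto
  then have "(\<Sum>r=1..pf. if r \<le> s then 1 else \<bar>\<beta>$(\<pi> r)\<bar> / t)
      = real s + (\<Sum>r=s+1..pf. \<bar>\<beta>$(\<pi> r)\<bar>) / t"
    by (simp add: sum.union_disjoint sum_divide_distrib)
  also have "(\<Sum>r=s+1..pf. \<bar>\<beta>$(\<pi> r)\<bar>) = t * (real kbar - real s)"
    using assms(2) by (simp add: t_def tau_split_def)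
  finally show ?thesis using assms(1,2) unfolding t_def[symmetric] by simp
qed

lemma persp_eq_divide: "\<bar>b\<bar> \<le> M * z \<Longrightarrow> persp b z = ereal (b\<^sup>2 / z)"
  by (auto simp: persp_def)

lemma persp_obj_eq_sum:
  assumes "\<And>j. \<bar>\<beta>$j\<bar> \<le> M * z$j"
  shows "persp_obj \<beta> z = ereal ((\<Sum>j\<in>UNIV. (\<beta>$j)\<^sup>2 / z$j) / 2)"
  by (simp add: persp_obj_def persp_eq_divide[OF assms])

locale bnb_node =
  fixes J0 J1 Jf :: "'p::finite set" and k :: nat
  assumes disjoint: "J0 \<inter> J1 = {}" "J0 \<inter> Jf = {}" "J1 \<inter> Jf = {}"
    and cover: "J0 \<union> J1 \<union> Jf = UNIV"
    and card_J1_le: "card J1 \<le> k"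
begin

abbreviation kbar :: nat where "kbar \<equiv> k - card J1"

lemma sum_UNIV_split: "(\<Sum>j\<in>UNIV. w j) = sum w J0 + sum w J1 + sum w Jf"
  using disjoint by (simp flip: cover add: sum.union_disjoint Int_Un_distrib2)

lemma node_feasible_z_iff:
  "node_feasible_z J0 J1 Jf k M \<beta> z \<longleftrightarrow>
     (\<forall>j\<in>J0. z$j = 0) \<and> (\<forall>j\<in>J1. z$j = 1) \<and> (\<forall>j\<in>Jf. 0 \<le> z$j \<and> z$j \<le> 1) \<and>
     (\<Sum>j\<in>Jf. z$j) \<le> real kbar \<and> (\<forall>j. \<bar>\<beta>$j\<bar> \<le> M * z$j)"
proof -
  have "(\<Sum>j\<in>UNIV. z$j) = real (card J1) + (\<Sum>j\<in>Jf. z$j)"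
    if "\<forall>j\<in>J0. z$j = 0" "\<forall>j\<in>J1. z$j = 1"
    using that sum_UNIV_split[of "\<lambda>j. z$j"] by simp
  then show ?thesis
    using card_J1_le by (auto simp: node_feasible_z_def of_nat_diff)
qed

lemma node_feasible_z_abs_le:
  assumes "node_feasible_z J0 J1 Jf k M \<beta> z" "0 \<le> M"
  shows "\<bar>\<beta>$j\<bar> \<le> M"
proof -
  have "j \<in> J0 \<or> j \<in> J1 \<or> j \<in> Jf" using cover by auto
  then have "\<bar>\<beta>$j\<bar> \<le> M * z$j" and "z$j \<le> 1"
    using assms(1) by (auto simp: node_feasible_z_iff)
  with assms(2) show ?thesis by (meson mult_left_le order_trans)
qed

lemma node_feasible_zI:
  assumes z0: "node_feasible_z J0 J1 Jf k M \<beta> z0" and "0 \<le> M"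
    and J0: "\<forall>j\<in>J0. w$j = 0" and J1: "\<forall>j\<in>J1. w$j = 1"
    and Jf: "\<forall>j\<in>Jf. 0 \<le> w$j \<and> w$j \<le> 1 \<and> \<bar>\<beta>$j\<bar> \<le> M * w$j"
    and budget: "(\<Sum>j\<in>Jf. w$j) \<le> real kbar"
  shows "node_feasible_z J0 J1 Jf k M \<beta> w"
proof -
  have "\<bar>\<beta>$j\<bar> \<le> M * w$j" for j
  proof -
    have "j \<in> J0 \<or> j \<in> J1 \<or> j \<in> Jf" using cover by auto
    moreover have "\<beta>$j = 0" if "j \<in> J0"
      using z0 that by (auto simp: node_feasible_z_iff dest: spec[of _ j])
    ultimately show ?thesis
      using J0 J1 Jf node_feasible_z_abs_le[OF z0 \<open>0 \<le> M\<close>] by auto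
  qed
  with J0 J1 Jf budget show ?thesis by (simp add: node_feasible_z_iff)
qed

lemma card_free_support_eq_0:
  assumes "node_feasible_z J0 J1 Jf k M \<beta> z" "kbar = 0"
  shows "card {j\<in>Jf. \<beta>$j \<noteq> 0} = 0"
proof -
  have nonneg: "\<forall>i\<in>Jf. 0 \<le> z$i" and "(\<Sum>i\<in>Jf. z$i) \<le> 0"
    using assms by (auto simp: node_feasible_z_iff)
  moreover have "0 \<le> (\<Sum>i\<in>Jf. z$i)" using nonneg by (simp add: sum_nonneg)
  ultimately have "(\<Sum>i\<in>Jf. z$i) = 0" by linarith
  with nonneg have "\<forall>j\<in>Jf. z$j = 0" by (simp add: sum_nonneg_eq_0_iff)
  moreover have "\<forall>j. \<bar>\<beta>$j\<bar> \<le> M * z$j" using assms(1) by (simp add: node_feasible_z_iff)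
  ultimately have "\<forall>j\<in>Jf. \<beta>$j = 0" by (metis abs_le_zero_iff mult_zero_right)
  then show ?thesis by simp
qed

lemma persp_obj_eq_g_node:
  assumes z: "node_feasible_z J0 J1 Jf k M \<beta> z"
    and minimal: "\<And>w. node_feasible_z J0 J1 Jf k M \<beta> w \<Longrightarrow>
                    (\<Sum>j\<in>Jf. (\<beta>$j)\<^sup>2 / z$j) \<le> (\<Sum>j\<in>Jf. (\<beta>$j)\<^sup>2 / w$j)"
  shows "persp_obj \<beta> z = g_node J0 J1 Jf k M \<beta>"
  unfolding g_node_def
proof (rule INF_eqI[symmetric])
  fix w assume "w \<in> {w. node_feasible_z J0 J1 Jf k M \<beta> w}"
  then have w: "node_feasible_z J0 J1 Jf k M \<beta> w" by simp
  have fixed: "(\<Sum>j\<in>J. (\<beta>$j)\<^sup>2 / z$j) = (\<Sum>j\<in>J. (\<beta>$j)\<^sup>2 / w$j)" if "J = J0 \<or> J = J1" for J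
    using z w that by (auto simp: node_feasible_z_iff)
  have "(\<Sum>j\<in>UNIV. (\<beta>$j)\<^sup>2 / z$j) \<le> (\<Sum>j\<in>UNIV. (\<beta>$j)\<^sup>2 / w$j)"
    using minimal[OF w] fixed unfolding sum_UNIV_split by simp
  moreover have bounds: "\<And>j. \<bar>\<beta>$j\<bar> \<le> M * z$j" "\<And>j. \<bar>\<beta>$j\<bar> \<le> M * w$j"
    using z w by (auto simp: node_feasible_z_iff)
  ultimately show "persp_obj \<beta> z \<le> persp_obj \<beta> w"
    by (simp add: persp_obj_eq_sum[OF bounds(1)] persp_obj_eq_sum[OF bounds(2)])
qed (use z in auto)

lemma ex_node_feasible_z_of_minimizer:
  fixes F :: "real^'p \<Rightarrow> real"
  assumes "0 < c" "0 \<le> M"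
    and opt: "\<And>\<beta>. ereal (F \<beta>s) + ereal c * g_node J0 J1 Jf k M \<beta>s
                  \<le> ereal (F \<beta>) + ereal c * g_node J0 J1 Jf k M \<beta>"
  shows "\<exists>z. node_feasible_z J0 J1 Jf k M \<beta>s z"
proof (rule ccontr)
  assume "\<nexists>z. node_feasible_z J0 J1 Jf k M \<beta>s z"
  then have "g_node J0 J1 Jf k M \<beta>s = \<infinity>"
    by (simp add: g_node_def top_ereal_def)
  with \<open>0 < c\<close> have top: "ereal (F \<beta>s) + ereal c * g_node J0 J1 Jf k M \<beta>s = \<infinity>"
    by simp
  define z1 :: "real^'p" where "z1 = (\<chi> j. if j \<in> J1 then 1 else 0)"
  have "(\<Sum>j\<in>Jf. z1$j) = 0"
    unfolding z1_def using disjoint(3) by (intro sum.neutral) auto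
  then have z1: "node_feasible_z J0 J1 Jf k M 0 z1"
    using disjoint \<open>0 \<le> M\<close> by (auto simp: node_feasible_z_iff z1_def)
  then have "g_node J0 J1 Jf k M 0 \<le> persp_obj 0 z1"
    unfolding g_node_def by (rule INF_lower[OF CollectI])
  also have "\<dots> = 0"
    by (subst persp_obj_eq_sum[of _ M]) (use z1 in \<open>auto simp: node_feasible_z_iff\<close>)
  finally have "ereal c * g_node J0 J1 Jf k M 0 \<le> ereal c * 0"
    using \<open>0 < c\<close> by (intro ereal_mult_left_mono) auto
  then have "ereal (F 0) + ereal c * g_node J0 J1 Jf k M 0 \<le> ereal (F 0)"
    using add_left_mono by fastforce
  with opt[of 0] top have "\<infinity> \<le> ereal (F 0)" by (metis order_trans)
  then show False by simp
qed

lemma zstar_J0: "j \<in> J0 \<Longrightarrow> zstar J0 J1 Jf k \<beta> \<pi> s $ j = 0"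
  by (simp add: zstar_def Let_def)

lemma zstar_J1: "j \<in> J1 \<Longrightarrow> zstar J0 J1 Jf k \<beta> \<pi> s $ j = 1"
  using disjoint(1) by (auto simp: zstar_def Let_def)

lemma zstar_free_sparse:
  assumes "j \<in> Jf" "card {i\<in>Jf. \<beta>$i \<noteq> 0} \<le> kbar"
  shows "zstar J0 J1 Jf k \<beta> \<pi> s $ j = (if \<beta>$j \<noteq> 0 then 1 else 0)"
proof -
  have "\<beta>$j = 0" if "kbar = 0"
    using assms that by (auto simp: card_eq_0_iff)
  then show ?thesis
    using assms disjoint by (auto simp: zstar_def Let_def)
qed

lemma zstar_free_split:
  assumes "j \<in> Jf" "0 < kbar" "kbar < card {i\<in>Jf. \<beta>$i \<noteq> 0}"
  shows "zstar J0 J1 Jf k \<beta> \<pi> s $ j =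
           (if inv_into {1..card Jf} \<pi> j \<le> s then 1
            else \<bar>\<beta>$j\<bar> / tau_split \<beta> \<pi> (card Jf) kbar s)"
  using assms disjoint by (auto simp: zstar_def Let_def)

lemma zstar_optimal_sparse:
  fixes \<pi> :: "nat \<Rightarrow> 'p" and s :: nat
  assumes z0: "node_feasible_z J0 J1 Jf k M \<beta> z0" and "0 \<le> M"
    and sparse: "card {j\<in>Jf. \<beta>$j \<noteq> 0} \<le> kbar"
  defines "zs \<equiv> zstar J0 J1 Jf k \<beta> \<pi> s"
  shows "node_feasible_z J0 J1 Jf k M \<beta> zs \<and> persp_obj \<beta> zs = g_node J0 J1 Jf k M \<beta>"
proof
  have free: "zs$j = (if \<beta>$j \<noteq> 0 then 1 else 0)" if "j \<in> Jf" for j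
    unfolding zs_def using zstar_free_sparse[OF that sparse] .
  have "(\<Sum>j\<in>Jf. zs$j) = (\<Sum>j\<in>Jf. if \<beta>$j \<noteq> 0 then 1 else 0)"
    using free by (intro sum.cong) auto
  also have "\<dots> = real (card {j\<in>Jf. \<beta>$j \<noteq> 0})"
    by (simp add: sum.inter_filter[symmetric])
  finally have "(\<Sum>j\<in>Jf. zs$j) \<le> real kbar" using sparse by simp
  then show feasible: "node_feasible_z J0 J1 Jf k M \<beta> zs"
    using node_feasible_z_abs_le[OF z0 \<open>0 \<le> M\<close>] free
    by (intro node_feasible_zI[OF z0 \<open>0 \<le> M\<close>]) (auto simp: zs_def zstar_J0 zstar_J1)
  have "(\<Sum>j\<in>Jf. (\<beta>$j)\<^sup>2 / zs$j) \<le> (\<Sum>j\<in>Jf. (\<beta>$j)\<^sup>2 / w$j)"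
    if w: "node_feasible_z J0 J1 Jf k M \<beta> w" for w
  proof (rule sum_mono)
    fix j assume j: "j \<in> Jf"
    have "(\<beta>$j)\<^sup>2 / zs$j = (\<beta>$j)\<^sup>2" using free[OF j] by simp
    also have "\<dots> \<le> (\<beta>$j)\<^sup>2 / w$j"
      using w j by (intro sq_le_divide_of_le_one) (auto simp: node_feasible_z_iff dest: spec[of _ j])
    finally show "(\<beta>$j)\<^sup>2 / zs$j \<le> (\<beta>$j)\<^sup>2 / w$j" .
  qed
  with feasible show "persp_obj \<beta> zs = g_node J0 J1 Jf k M \<beta>"
    by (rule persp_obj_eq_g_node)
qed

lemma tau_split_le_bound:
  assumes z0: "node_feasible_z J0 J1 Jf k M \<beta> z0" and "0 \<le> M"
    and \<pi>: "bij_betw \<pi> {1..card Jf} Jf"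
    and split: "split_ok \<beta> \<pi> (card Jf) kbar s"
  shows "tau_split \<beta> \<pi> (card Jf) kbar s \<le> M"
proof (cases "s = 0")
  case True
  have "(\<Sum>r=1..card Jf. \<bar>\<beta>$(\<pi> r)\<bar>) = (\<Sum>j\<in>Jf. \<bar>\<beta>$j\<bar>)"
    using sum.reindex_bij_betw[OF \<pi>] by simp
  also have "\<dots> \<le> (\<Sum>j\<in>Jf. M * z0$j)"
    using z0 by (intro sum_mono) (simp add: node_feasible_z_iff)
  also have "\<dots> = M * (\<Sum>j\<in>Jf. z0$j)" by (simp add: sum_distrib_left)
  also have "\<dots> \<le> M * real kbar"
    using z0 \<open>0 \<le> M\<close> by (intro mult_left_mono) (simp_all add: node_feasible_z_iff)
  finally have "(\<Sum>r=1..card Jf. \<bar>\<beta>$(\<pi> r)\<bar>) \<le> M * real kbar" .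
  moreover have "s < kbar" using split by (simp add: split_ok_def)
  then have "0 < real kbar" by simp
  ultimately show ?thesis
    using True by (simp add: tau_split_def pos_divide_le_eq)
next
  case False
  with split have "tau_split \<beta> \<pi> (card Jf) kbar s \<le> \<bar>\<beta>$(\<pi> s)\<bar>"
    by (simp add: split_ok_def)
  also have "\<dots> \<le> M" by (rule node_feasible_z_abs_le[OF z0 \<open>0 \<le> M\<close>])
  finally show ?thesis .
qed

lemma zstar_split_profile:
  fixes s :: nat
  assumes \<pi>: "bij_betw \<pi> {1..card Jf} Jf"
    and sorted: "\<And>r1 r2. 1 \<le> r1 \<Longrightarrow> r1 \<le> r2 \<Longrightarrow> r2 \<le> card Jf \<Longrightarrow>
                   \<bar>\<beta>$(\<pi> r2)\<bar> \<le> \<bar>\<beta>$(\<pi> r1)\<bar>"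
    and dense: "0 < kbar" "kbar < card {j\<in>Jf. \<beta>$j \<noteq> 0}"
    and split: "split_ok \<beta> \<pi> (card Jf) kbar s"
  defines "zs \<equiv> zstar J0 J1 Jf k \<beta> \<pi> s" and "t \<equiv> tau_split \<beta> \<pi> (card Jf) kbar s"
  shows "0 < t"
    and "j \<in> Jf \<Longrightarrow> (zs$j = 1 \<and> t \<le> \<bar>\<beta>$j\<bar>) \<or> (zs$j = \<bar>\<beta>$j\<bar> / t \<and> \<bar>\<beta>$j\<bar> \<le> t)"
    and "(\<Sum>j\<in>Jf. zs$j) = real kbar"
proof -
  have "s < kbar" using split by (simp add: split_ok_def)
  moreover have "card {j\<in>Jf. \<beta>$j \<noteq> 0} \<le> card Jf" by (intro card_mono) auto
  ultimately have s: "s < card {j\<in>Jf. \<beta>$j \<noteq> 0}" "s \<le> card Jf" using dense by linarith+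
  show t: "0 < t" unfolding t_def using tau_split_pos[OF \<pi> s(1) \<open>s < kbar\<close>] .
  have free: "zs$(\<pi> r) = (if r \<le> s then 1 else \<bar>\<beta>$(\<pi> r)\<bar> / t)" if "r \<in> {1..card Jf}" for r
    using zstar_free_split[OF bij_betw_apply[OF \<pi> that] dense] bij_betw_inv_into_left[OF \<pi> that]
    by (simp add: zs_def t_def)
  show "(zs$j = 1 \<and> t \<le> \<bar>\<beta>$j\<bar>) \<or> (zs$j = \<bar>\<beta>$j\<bar> / t \<and> \<bar>\<beta>$j\<bar> \<le> t)" if "j \<in> Jf" for j
  proof -
    have "j \<in> \<pi> ` {1..card Jf}" using bij_betw_imp_surj_on[OF \<pi>] that by simp
    then obtain r where r: "r \<in> {1..card Jf}" "\<pi> r = j" by auto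
    show ?thesis
    proof (cases "r \<le> s")
      case True
      with free[OF r(1)] split_ok_separates(1)[OF sorted split s(2) r(1)] r(2)
      show ?thesis by (simp add: t_def)
    next
      case False
      with free[OF r(1)] split_ok_separates(2)[OF sorted split s(2) r(1)] r(2)
      show ?thesis by (simp add: t_def)
    qed
  qed
  have "(\<Sum>j\<in>Jf. zs$j) = (\<Sum>r=1..card Jf. zs$(\<pi> r))"
    using sum.reindex_bij_betw[OF \<pi>, of "\<lambda>j. zs$j"] by simp
  also have "\<dots> = (\<Sum>r=1..card Jf. if r \<le> s then 1 else \<bar>\<beta>$(\<pi> r)\<bar> / t)"
    using free by (intro sum.cong) auto
  also have "\<dots> = real kbar"
    unfolding t_def
    by (rule sum_threshold_profile_eq) (use t \<open>s < kbar\<close> s(2) in \<open>simp_all add: t_def\<close>)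
  finally show "(\<Sum>j\<in>Jf. zs$j) = real kbar" .
qed

lemma zstar_optimal_split:
  fixes s :: nat
  assumes z0: "node_feasible_z J0 J1 Jf k M \<beta> z0" and "0 \<le> M"
    and \<pi>: "bij_betw \<pi> {1..card Jf} Jf"
    and sorted: "\<And>r1 r2. 1 \<le> r1 \<Longrightarrow> r1 \<le> r2 \<Longrightarrow> r2 \<le> card Jf \<Longrightarrow>
                   \<bar>\<beta>$(\<pi> r2)\<bar> \<le> \<bar>\<beta>$(\<pi> r1)\<bar>"
    and dense: "0 < kbar" "kbar < card {j\<in>Jf. \<beta>$j \<noteq> 0}"
    and split: "split_ok \<beta> \<pi> (card Jf) kbar s"
  defines "zs \<equiv> zstar J0 J1 Jf k \<beta> \<pi> s"
  shows "node_feasible_z J0 J1 Jf k M \<beta> zs \<and> persp_obj \<beta> zs = g_node J0 J1 Jf k M \<beta>"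
proof
  define t where "t = tau_split \<beta> \<pi> (card Jf) kbar s"
  have t: "0 < t"
    and profile: "\<And>j. j \<in> Jf \<Longrightarrow>
                    (zs$j = 1 \<and> t \<le> \<bar>\<beta>$j\<bar>) \<or> (zs$j = \<bar>\<beta>$j\<bar> / t \<and> \<bar>\<beta>$j\<bar> \<le> t)"
    and budget: "(\<Sum>j\<in>Jf. zs$j) = real kbar"
    unfolding zs_def t_def using zstar_split_profile[OF \<pi> _ dense split] sorted by blast+
  have "t \<le> M"
    unfolding t_def using tau_split_le_bound[OF z0 \<open>0 \<le> M\<close> \<pi> split] .
  have box: "0 \<le> zs$j \<and> zs$j \<le> 1" if "j \<in> Jf" for j
    using profile[OF that] t by auto
  have bound: "\<bar>\<beta>$j\<bar> \<le> M * zs$j" if "j \<in> Jf" for j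
    using profile[OF that]
  proof
    assume "zs$j = 1 \<and> t \<le> \<bar>\<beta>$j\<bar>"
    then show ?thesis using node_feasible_z_abs_le[OF z0 \<open>0 \<le> M\<close>] by simp
  next
    assume "zs$j = \<bar>\<beta>$j\<bar> / t \<and> \<bar>\<beta>$j\<bar> \<le> t"
    moreover have "\<bar>\<beta>$j\<bar> * t \<le> M * \<bar>\<beta>$j\<bar>"
      using \<open>t \<le> M\<close> by (simp add: mult.commute mult_right_mono)
    ultimately show ?thesis using t by (simp add: pos_le_divide_eq)
  qed
  show feasible: "node_feasible_z J0 J1 Jf k M \<beta> zs"
    using box bound budget
    by (intro node_feasible_zI[OF z0 \<open>0 \<le> M\<close>]) (auto simp: zs_def zstar_J0 zstar_J1)
  have "(\<Sum>j\<in>Jf. (\<beta>$j)\<^sup>2 / zs$j) \<le> (\<Sum>j\<in>Jf. (\<beta>$j)\<^sup>2 / w$j)"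
    if w: "node_feasible_z J0 J1 Jf k M \<beta> w" for w
  proof (rule threshold_minimizes_sum_sq_divide[OF t profile])
    have "\<forall>j. \<bar>\<beta>$j\<bar> \<le> M * w$j" using w by (simp add: node_feasible_z_iff)
    then show "w$j = 0 \<Longrightarrow> \<beta>$j = 0" for j by (metis abs_le_zero_iff mult_zero_right)
    show "j \<in> Jf \<Longrightarrow> 0 \<le> w$j \<and> w$j \<le> 1" for j using w by (simp add: node_feasible_z_iff)
    show "(\<Sum>j\<in>Jf. w$j) \<le> (\<Sum>j\<in>Jf. zs$j)" using w budget by (simp add: node_feasible_z_iff)
  qed
  with feasible show "persp_obj \<beta> zs = g_node J0 J1 Jf k M \<beta>"
    by (rule persp_obj_eq_g_node)
qed

end

theorem theorem1:
  fixes X :: "real^'p::finite^'n::finite"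
    and y :: "real^'n"
    and f :: "real^'n \<Rightarrow> real^'n \<Rightarrow> real"
    and lam2 M :: real
    and k :: nat
    and J0 J1 Jf :: "'p set"
    and \<beta>s :: "real^'p"
    and \<pi> :: "nat \<Rightarrow> 'p"
  assumes f_convex: "convex_on UNIV (\<lambda>u. f u y)"
    and f_diff: "\<And>u. (\<lambda>u. f u y) differentiable (at u)"
    and lam_pos: "lam2 > 0"
    and M_pos: "M > 0"
    and partition: "J0 \<inter> J1 = {}" "J0 \<inter> Jf = {}" "J1 \<inter> Jf = {}" "J0 \<union> J1 \<union> Jf = UNIV"
    and node_valid: "card J1 \<le> k"
    and opt: "\<And>\<beta>. ereal (f (X *v \<beta>s) y) + ereal (2 * lam2) * g_node J0 J1 Jf k M \<beta>s
                  \<le> ereal (f (X *v \<beta>) y) + ereal (2 * lam2) * g_node J0 J1 Jf k M \<beta>"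
    and pi_bij: "bij_betw \<pi> {1..card Jf} Jf"
    and pi_sorted: "\<And>r1 r2. 1 \<le> r1 \<Longrightarrow> r1 \<le> r2 \<Longrightarrow> r2 \<le> card Jf \<Longrightarrow>
                       \<bar>\<beta>s$(\<pi> r2)\<bar> \<le> \<bar>\<beta>s$(\<pi> r1)\<bar>"
  shows "(k - card J1 \<noteq> 0 \<and> k - card J1 < card {j\<in>Jf. \<beta>s$j \<noteq> 0} \<longrightarrow>
            (\<exists>s. split_ok \<beta>s \<pi> (card Jf) (k - card J1) s))
       \<and> (\<forall>s. (k - card J1 \<noteq> 0 \<and> k - card J1 < card {j\<in>Jf. \<beta>s$j \<noteq> 0} \<longrightarrow>
                  split_ok \<beta>s \<pi> (card Jf) (k - card J1) s) \<longrightarrow>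
              node_feasible_z J0 J1 Jf k M \<beta>s (zstar J0 J1 Jf k \<beta>s \<pi> s) \<and>
              persp_obj \<beta>s (zstar J0 J1 Jf k \<beta>s \<pi> s) = g_node J0 J1 Jf k M \<beta>s)"
proof -
  interpret bnb_node J0 J1 Jf k using partition node_valid by unfold_locales
  obtain z0 where z0: "node_feasible_z J0 J1 Jf k M \<beta>s z0"
    using ex_node_feasible_z_of_minimizer[of "2 * lam2" M "\<lambda>\<beta>. f (X *v \<beta>) y"] lam_pos M_pos opt
    by auto
  let ?nnz = "card {j\<in>Jf. \<beta>s$j \<noteq> 0}"
  have "?nnz \<le> card Jf" by (intro card_mono) auto
  then have exists: "\<exists>s. split_ok \<beta>s \<pi> (card Jf) kbar s" if "kbar \<noteq> 0 \<and> kbar < ?nnz"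
    using that by (intro split_ok_exists) auto
  have "node_feasible_z J0 J1 Jf k M \<beta>s (zstar J0 J1 Jf k \<beta>s \<pi> s) \<and>
        persp_obj \<beta>s (zstar J0 J1 Jf k \<beta>s \<pi> s) = g_node J0 J1 Jf k M \<beta>s"
    if split: "kbar \<noteq> 0 \<and> kbar < ?nnz \<longrightarrow> split_ok \<beta>s \<pi> (card Jf) kbar s" for s
  proof (cases "kbar \<noteq> 0 \<and> kbar < ?nnz")
    case True
    with split M_pos show ?thesis
      by (intro zstar_optimal_split[OF z0 _ pi_bij pi_sorted]) auto
  next
    case False
    then have "?nnz \<le> kbar"
      using card_free_support_eq_0[OF z0] by (cases "kbar = 0") auto
    with z0 M_pos show ?thesis by (intro zstar_optimal_sparse) auto
  qed
  with exists show ?thesis by blast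
qed

end
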